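(* Let $U=\mathrm{Unif}(0,1)$ and let $P$ be a continuous distribution supported on $[0,1]$ with invertible CDF such that $\sup_{A\subseteq[0,1]}|P(A)-U(A)|\le\epsilon$. Let $X_{(k)}$ be the $k$-th smallest of $m$ i.i.d. draws from $P$, $1\le k\le m$. Then $\left|\mathbb{E}[X_{(k)}]-\frac{k}{m+1}\right|\le\epsilon$. *)

theory Defs
  imports "HOL-Probability.Probability"
begin

definition order_stat :: "nat \<Rightarrow> nat \<Rightarrow> (nat \<Rightarrow> real) \<Rightarrow> real" where
  "order_stat m k w = sort (map w [0..<m]) ! (k - 1)"

end

theory Submission
  imports Defs
begin

text \<open>
  Let Y be the k-th order statistic of m samples. For a distribution R on [0,1], Y > t
  iff fewer than k samples are \<open>\<le> t\<close>, so \<open>Pr\<^sub>R(Y > t) = B(cdf R t)\<close> with B the lower tail of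
  the binomial distribution Bin(m, q) at k, and by the layer-cake formula
  \<open>E\<^sub>R Y = \<integral>\<^sub>0\<^sup>1 B(cdf R t) dt\<close>. For the uniform distribution this is a sum of Beta integrals
  equal to k/(m+1). For general R, \<open>B(cdf R t)\<close> is the probability that the uniform order
  statistic exceeds \<open>cdf R t\<close>, and exchanging the two integrals gives \<open>E\<^sub>R Y = E\<^sub>U \<psi>(Y)\<close>, where
  \<open>\<psi> v\<close> is the Lebesgue measure of \<open>{t \<in> [0,1]. cdf R t < v}\<close>. If \<open>|cdf P t - t| \<le> \<epsilon>\<close> on [0,1],
  then \<open>|\<psi> v - v| \<le> \<epsilon>\<close>, which gives the claim.
\<close>

section \<open>Order statistics\<close>

lemma sorted_nth_le_iff:
  fixes ys :: "'a::linorder list"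
  assumes "sorted ys" "j < length ys"
  shows "ys ! j \<le> t \<longleftrightarrow> j < length (filter (\<lambda>x. x \<le> t) ys)"
proof -
  let ?I = "{i. i < length ys \<and> ys ! i \<le> t}"
  have card_I: "length (filter (\<lambda>x. x \<le> t) ys) = card ?I"
    by (simp add: length_filter_conv_card)
  show ?thesis
  proof
    assume "ys ! j \<le> t"
    then have "{..j} \<subseteq> ?I"
      using assms by (auto intro: order_trans[OF sorted_nth_mono])
    from card_mono[OF _ this] show "j < length (filter (\<lambda>x. x \<le> t) ys)"
      by (simp add: card_I)
  next
    assume "j < length (filter (\<lambda>x. x \<le> t) ys)"
    show "ys ! j \<le> t"
    proof (rule ccontr)
      assume "\<not> ys ! j \<le> t"
      then have "?I \<subseteq> {..<j}"
        using assms sorted_nth_mono[OF assms(1), of j] by (force simp: not_less[symmetric])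
      from card_mono[OF _ this] show False
        using \<open>j < length (filter (\<lambda>x. x \<le> t) ys)\<close> by (simp add: card_I)
    qed
  qed
qed

lemma sum_subsets_by_card:
  fixes c :: "nat \<Rightarrow> 'a::comm_semiring_1"
  assumes "finite A"
  shows "(\<Sum>S | S \<subseteq> A \<and> card S < k. c (card S)) = (\<Sum>j<k. of_nat (card A choose j) * c j)"
proof -
  let ?Sk = "{S. S \<subseteq> A \<and> card S < k}"
  have "finite ?Sk"
    using assms by (rule finite_subset[rotated, OF finite_Pow_iff[THEN iffD2]]) blast
  then have "(\<Sum>S\<in>?Sk. c (card S)) = (\<Sum>j<k. \<Sum>S | S \<in> ?Sk \<and> card S = j. c (card S))"
    by (intro sum.group[symmetric]) auto
  also have "\<dots> = (\<Sum>j<k. \<Sum>S | S \<subseteq> A \<and> card S = j. c j)"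
    by (intro sum.cong) auto
  also have "\<dots> = (\<Sum>j<k. of_nat (card A choose j) * c j)"
    using assms by (simp add: n_subsets)
  finally show ?thesis .
qed

lemma prod_if_eq_power:
  fixes q r :: "'a::comm_monoid_mult"
  assumes "S \<subseteq> {..<m}"
  shows "(\<Prod>i<m. if i \<in> S then q else r) = q ^ card S * r ^ (m - card S)"
proof -
  have "(\<Prod>i<m. if i \<in> S then q else r) = (\<Prod>i\<in>S. q) * (\<Prod>i\<in>{..<m} - S. r)"
    using assms by (subst prod.If_cases) (auto simp: Int_absorb1 Diff_eq)
  then show ?thesis
    using assms by (simp add: card_Diff_subset finite_subset)
qed

lemma order_stat_greater_iff:
  assumes "1 \<le> k" "k \<le> m"
  shows "t < order_stat m k w \<longleftrightarrow> card {i. i < m \<and> w i \<le> t} < k"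
proof -
  let ?ys = "sort (map w [0..<m])"
  have "length (filter (\<lambda>x. x \<le> t) ?ys) = length (filter (\<lambda>x. x \<le> t) (map w [0..<m]))"
    by (metis mset_filter mset_sort size_mset)
  also have "\<dots> = card {i. i < m \<and> w i \<le> t}"
    by (simp add: length_filter_conv_card, intro arg_cong[where f=card]) auto
  finally have "order_stat m k w \<le> t \<longleftrightarrow> k - 1 < card {i. i < m \<and> w i \<le> t}"
    unfolding order_stat_def using assms by (subst sorted_nth_le_iff) auto
  then show ?thesis
    using assms by linarith
qed

lemma order_stat_mem:
  assumes "1 \<le> k" "k \<le> m"
  shows "order_stat m k w \<in> w ` {..<m}"
proof -
  have "order_stat m k w \<in> set (sort (map w [0..<m]))"
    unfolding order_stat_def using assms by (intro nth_mem) auto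
  then show ?thesis
    by auto
qed

lemma PiE_threshold_iff:
  fixes t :: "'a::linorder"
  assumes "S \<subseteq> {..<m}"
  shows "w \<in> PiE {..<m} (\<lambda>i. if i \<in> S then {..t} else {t<..}) \<longleftrightarrow>
    w \<in> extensional {..<m} \<and> {i. i < m \<and> w i \<le> t} = S"
proof -
  have "w \<in> PiE {..<m} (\<lambda>i. if i \<in> S then {..t} else {t<..}) \<longleftrightarrow>
      w \<in> extensional {..<m} \<and> (\<forall>i<m. w i \<le> t \<longleftrightarrow> i \<in> S)"
    by (auto simp: PiE_iff not_le) (meson lessThan_iff not_less)
  also have "(\<forall>i<m. w i \<le> t \<longleftrightarrow> i \<in> S) \<longleftrightarrow> {i. i < m \<and> w i \<le> t} = S"
    using assms by auto
  finally show ?thesis .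
qed

lemma order_stat_greater_eq_Union_PiE:
  assumes "real_distribution R" "1 \<le> k" "k \<le> m"
  shows "{w \<in> space (PiM {..<m} (\<lambda>_. R)). t < order_stat m k w} =
    (\<Union>S \<in> {S. S \<subseteq> {..<m} \<and> card S < k}. PiE {..<m} (\<lambda>i. if i \<in> S then {..t} else {t<..}))"
proof -
  have "space (PiM {..<m} (\<lambda>_. R)) = extensional {..<m}"
    using real_distribution.space_eq_univ[OF assms(1)] by (simp add: space_PiM PiE_def)
  then show ?thesis
    using order_stat_greater_iff[OF assms(2,3)] by (auto simp: PiE_threshold_iff)
qed

lemma order_stat_measurable:
  assumes "real_distribution R" "1 \<le> k" "k \<le> m"
  shows "order_stat m k \<in> borel_measurable (PiM {..<m} (\<lambda>_. R))"
proof (subst borel_measurable_iff_greater, intro allI)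
  fix t
  have "finite {S. S \<subseteq> {..<m} \<and> card S < k}"
    by (rule finite_subset[of _ "Pow {..<m}"]) auto
  then show "{w \<in> space (PiM {..<m} (\<lambda>_. R)). t < order_stat m k w} \<in> sets (PiM {..<m} (\<lambda>_. R))"
    unfolding order_stat_greater_eq_Union_PiE[OF assms]
    using real_distribution.events_eq_borel[OF assms(1)] by (auto intro!: sets_PiM_I_finite)
qed

lemma AE_order_stat_in_unit_interval:
  assumes "real_distribution R" "measure R {0..1} = 1" "1 \<le> k" "k \<le> m"
  shows "AE w in PiM {..<m} (\<lambda>_. R). order_stat m k w \<in> {0..1}"
proof -
  interpret real_distribution R by fact
  have "AE x in R. x \<in> {0..1}"
    using assms(2) by (intro AE_prob_1) auto
  then have "AE w in PiM {..<m} (\<lambda>_. R). \<forall>i\<in>{..<m}. w i \<in> {0..1}"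
    by (intro AE_finite_allI AE_PiM_component) (auto simp: prob_space_axioms)
  then show ?thesis
    by eventually_elim (metis imageE order_stat_mem[OF assms(3,4)])
qed

definition binomial_lower_tail :: "nat \<Rightarrow> nat \<Rightarrow> real \<Rightarrow> real" where
  "binomial_lower_tail m k q = (\<Sum>j<k. real (m choose j) * q ^ j * (1 - q) ^ (m - j))"

lemma prob_order_stat_greater:
  assumes "real_distribution R" "1 \<le> k" "k \<le> m"
  shows "measure (PiM {..<m} (\<lambda>_. R)) {w \<in> space (PiM {..<m} (\<lambda>_. R)). t < order_stat m k w} =
    binomial_lower_tail m k (cdf R t)"
proof -
  interpret R: real_distribution R by fact
  interpret finite_product_prob_space "\<lambda>_. R" "{..<m}" by unfold_locales auto
  let ?Sk = "{S. S \<subseteq> {..<m} \<and> card S < k}"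
  let ?box = "\<lambda>S. PiE {..<m} (\<lambda>i. if i \<in> S then {..t} else {t<..})"
  have "measure R {t<..} = 1 - cdf R t"
    using R.prob_compl[of "{..t}"] by (simp add: cdf_def Compl_eq_Diff_UNIV[symmetric] not_le)
  then have box: "measure (PiM {..<m} (\<lambda>_. R)) (?box S) = cdf R t ^ card S * (1 - cdf R t) ^ (m - card S)"
    if "S \<subseteq> {..<m}" for S
    using that by (simp add: finite_measure_PiM_emb if_distrib cdf_def prod_if_eq_power)
  have "finite ?Sk"
    by (rule finite_subset[of _ "Pow {..<m}"]) auto
  moreover have "disjoint_family_on ?box ?Sk"
    unfolding disjoint_family_on_def
  proof (intro ballI impI)
    fix S T assume "S \<in> ?Sk" "T \<in> ?Sk" "S \<noteq> T"
    then show "?box S \<inter> ?box T = {}"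
      by (auto simp: PiE_threshold_iff)
  qed
  ultimately have "measure (PiM {..<m} (\<lambda>_. R)) (\<Union>S\<in>?Sk. ?box S) = (\<Sum>S\<in>?Sk. measure (PiM {..<m} (\<lambda>_. R)) (?box S))"
    by (intro finite_measure_finite_Union) (auto intro!: sets_PiM_I_finite)
  also have "\<dots> = binomial_lower_tail m k (cdf R t)"
    using sum_subsets_by_card[of "{..<m}" "\<lambda>j. cdf R t ^ j * (1 - cdf R t) ^ (m - j)" k]
    by (simp add: box binomial_lower_tail_def mult.assoc)
  finally show ?thesis
    by (simp add: order_stat_greater_eq_Union_PiE[OF assms])
qed

section \<open>Beta integrals and the layer-cake formula\<close>

lemma has_integral_power_mult_power_one_minus:
  "((\<lambda>t::real. t ^ a * (1 - t) ^ b) has_integral (fact a * fact b / fact (a + b + 1))) {0..1}"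
proof -
  have "((\<lambda>t. t powr (real a + 1 - 1) * (1 - t) powr (real b + 1 - 1))
      has_integral Beta (real a + 1) (real b + 1)) {0<..<1}"
    using has_integral_Beta_real[of "real a + 1" "real b + 1"] by (simp add: has_integral_Icc_iff_Ioo)
  then have "((\<lambda>t::real. t ^ a * (1 - t) ^ b) has_integral Beta (real a + 1) (real b + 1)) {0..1}"
    by (subst has_integral_Icc_iff_Ioo, rule has_integral_cong[THEN iffD1, rotated])
      (auto simp: powr_realpow)
  moreover have "Beta (real a + 1) (real b + 1) = fact a * fact b / fact (a + b + 1)"
  proof -
    have "Gamma (real n + 1) = fact n" for n
      using Gamma_fact[of n] by (simp add: add.commute)
    from this[of a] this[of b] this[of "a + b + 1"] show ?thesis
      by (simp add: Beta_def add_ac)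
  qed
  ultimately show ?thesis
    by simp
qed

lemma binomial_lower_tail_nonneg:
  "q \<in> {0..1} \<Longrightarrow> 0 \<le> binomial_lower_tail m k q"
  by (auto simp: binomial_lower_tail_def intro!: sum_nonneg)

lemma has_integral_binomial_lower_tail:
  assumes "k \<le> m"
  shows "(binomial_lower_tail m k has_integral real k / real (m + 1)) {0..1}"
proof -
  have "((\<lambda>q. real (m choose j) * q ^ j * (1 - q) ^ (m - j)) has_integral 1 / real (m + 1)) {0..1}"
    if "j \<le> m" for j
  proof -
    have "real (m choose j) * (fact j * fact (m - j) / fact (j + (m - j) + 1)) = 1 / real (m + 1)"
      using that by (simp add: binomial_fact field_simps add_nonneg_eq_0_iff)
    then show ?thesis
      using has_integral_mult_right[OF has_integral_power_mult_power_one_minus[of j "m - j"],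
          of "real (m choose j)"]
      by (simp add: mult.assoc)
  qed
  then have "(binomial_lower_tail m k has_integral (\<Sum>j<k. 1 / real (m + 1))) {0..1}"
    unfolding binomial_lower_tail_def[abs_def] using assms by (intro has_integral_sum) auto
  then show ?thesis
    by simp
qed

lemma nn_integral_threshold_swap:
  fixes Y :: "'a \<Rightarrow> real" and \<phi> :: "real \<Rightarrow> real"
  assumes "sigma_finite_measure M"
    and [measurable]: "Y \<in> borel_measurable M" "\<phi> \<in> borel_measurable borel" "A \<in> sets borel"
  shows "(\<integral>\<^sup>+t\<in>A. emeasure M {w \<in> space M. \<phi> t < Y w} \<partial>lborel) =
    (\<integral>\<^sup>+w. emeasure lborel {t \<in> A. \<phi> t < Y w} \<partial>M)"
proof -
  interpret pair_sigma_finite M lborel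
    using assms(1) lborel.sigma_finite_measure_axioms by (rule pair_sigma_finite.intro)
  define f where "f w t = (indicator {t \<in> A. \<phi> t < Y w} t :: ennreal)" for w t
  have "(\<lambda>(w, t). f w t) \<in> borel_measurable (M \<Otimes>\<^sub>M lborel)"
    unfolding f_def indicator_def by measurable
  moreover have "(\<integral>\<^sup>+w. f w t \<partial>M) = emeasure M {w \<in> space M. \<phi> t < Y w} * indicator A t" for t
  proof -
    have "(\<integral>\<^sup>+w. f w t \<partial>M) = (\<integral>\<^sup>+w. indicator A t * indicator {w \<in> space M. \<phi> t < Y w} w \<partial>M)"
      by (intro nn_integral_cong) (auto simp: f_def indicator_def)
    then show ?thesis
      by (simp add: nn_integral_cmult_indicator mult.commute)
  qed
  moreover have "(\<integral>\<^sup>+t. f w t \<partial>lborel) = emeasure lborel {t \<in> A. \<phi> t < Y w}" if "w \<in> space M" for w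
    unfolding f_def using that by (intro nn_integral_indicator) measurable
  ultimately show ?thesis
    using Fubini'[of f] by (simp cong: nn_integral_cong)
qed

lemma nn_integral_eq_tail_integral:
  fixes Y :: "'a \<Rightarrow> real"
  assumes "sigma_finite_measure M" "Y \<in> borel_measurable M" "AE w in M. Y w \<in> {0..1}"
  shows "(\<integral>\<^sup>+w. ennreal (Y w) \<partial>M) = (\<integral>\<^sup>+t\<in>{0..1}. emeasure M {w \<in> space M. t < Y w} \<partial>lborel)"
proof -
  have "(\<integral>\<^sup>+w. ennreal (Y w) \<partial>M) = (\<integral>\<^sup>+w. emeasure lborel {t \<in> {0..1}. t < Y w} \<partial>M)"
  proof (rule nn_integral_cong_AE)
    show "AE w in M. ennreal (Y w) = emeasure lborel {t \<in> {0..1}. t < Y w}"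
      using assms(3)
    proof eventually_elim
      case (elim w)
      then have "{t \<in> {0..1}. t < Y w} = {0..<Y w}"
        by auto
      with elim show ?case
        by simp
    qed
  qed
  also have "\<dots> = (\<integral>\<^sup>+t\<in>{0..1}. emeasure M {w \<in> space M. t < Y w} \<partial>lborel)"
    using nn_integral_threshold_swap[OF assms(1,2), of "\<lambda>t. t" "{0..1}"] by simp
  finally show ?thesis .
qed

lemma (in prob_space) abs_integral_diff_le:
  fixes f g :: "'a \<Rightarrow> real"
  assumes "integrable M f" "integrable M g" "AE x in M. \<bar>f x - g x\<bar> \<le> c"
  shows "\<bar>(\<integral>x. f x \<partial>M) - (\<integral>x. g x \<partial>M)\<bar> \<le> c"
proof -
  have "\<bar>(\<integral>x. f x \<partial>M) - (\<integral>x. g x \<partial>M)\<bar> = \<bar>\<integral>x. f x - g x \<partial>M\<bar>"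
    using assms(1,2) by simp
  also have "\<dots> \<le> (\<integral>x. \<bar>f x - g x\<bar> \<partial>M)"
    by (rule integral_abs_bound)
  also have "\<dots> \<le> c"
    using assms by (intro integral_le_const) auto
  finally show ?thesis .
qed

lemma borel_measurable_cdf:
  assumes "real_distribution R"
  shows "cdf R \<in> borel_measurable borel"
  using finite_borel_measure.cdf_nondecreasing[OF real_distribution.finite_borel_measure_M[OF assms]]
  by (intro borel_measurable_mono monoI) auto

lemma real_distribution_uniform_unit_interval:
  "real_distribution (uniform_measure lborel {0..1::real})"
  by (auto simp: real_distribution_def real_distribution_axioms_def intro!: prob_space_uniform_measure)

lemma cdf_uniform_unit_interval:
  "t \<in> {0..1} \<Longrightarrow> cdf (uniform_measure lborel {0..1::real}) t = t"
  by (simp add: cdf_def Int_atMost atLeastAtMost_iff)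

section \<open>Sublevel sets of a distribution function\<close>

text \<open>
  This is \<open>\<psi>\<close> above with F = cdf R. For a continuous strictly increasing F onto [0,1] it is the
  inverse function of F on [0,1];
  the identity \<open>E\<^sub>R Y = E\<^sub>U \<psi>(Y)\<close> is then the quantile coupling of order statistics in
  integrated form.
\<close>

definition sublevel_measure :: "(real \<Rightarrow> real) \<Rightarrow> real \<Rightarrow> real" where
  "sublevel_measure F v = measure lborel {t \<in> {0..1}. F t < v}"

lemma fmeasurable_Icc_real: "{a..b::real} \<in> fmeasurable lborel"
  by (simp add: fmeasurable_def emeasure_lborel_Icc_eq)

lemma sublevel_set_fmeasurable:
  fixes F :: "real \<Rightarrow> real"
  assumes [measurable]: "F \<in> borel_measurable borel"
  shows "{t \<in> {0..1}. F t < v} \<in> fmeasurable lborel"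
  by (rule fmeasurableI2[OF fmeasurable_Icc_real]) auto

lemma sublevel_measure_in_unit_interval:
  fixes F :: "real \<Rightarrow> real"
  assumes "F \<in> borel_measurable borel"
  shows "sublevel_measure F v \<in> {0..1}"
proof -
  have "sublevel_measure F v \<le> measure lborel {0..1::real}"
    unfolding sublevel_measure_def
    by (rule measure_mono_fmeasurable[OF _ fmeasurableD[OF sublevel_set_fmeasurable[OF assms]]
          fmeasurable_Icc_real]) auto
  then show ?thesis
    by (simp add: sublevel_measure_def)
qed

lemma borel_measurable_sublevel_measure:
  fixes F :: "real \<Rightarrow> real"
  assumes "F \<in> borel_measurable borel"
  shows "sublevel_measure F \<in> borel_measurable borel"
proof (rule borel_measurable_mono)
  show "mono (sublevel_measure F)"
    unfolding sublevel_measure_def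
    by (intro monoI measure_mono_fmeasurable fmeasurableD[OF sublevel_set_fmeasurable[OF assms]]
        sublevel_set_fmeasurable[OF assms]) auto
qed

lemma abs_sublevel_measure_diff_le:
  fixes F :: "real \<Rightarrow> real"
  assumes "F \<in> borel_measurable borel" "\<And>t. t \<in> {0..1} \<Longrightarrow> \<bar>F t - t\<bar> \<le> \<epsilon>" "v \<in> {0..1}"
  shows "\<bar>sublevel_measure F v - v\<bar> \<le> \<epsilon>"
proof -
  have "0 \<le> \<epsilon>"
    using assms(2)[of 0] by simp
  have "sublevel_measure F v \<le> measure lborel {0..v + \<epsilon>}"
    unfolding sublevel_measure_def using assms(2)
    by (intro measure_mono_fmeasurable fmeasurableD[OF sublevel_set_fmeasurable[OF assms(1)]]
        fmeasurable_Icc_real) fastforce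
  moreover have "measure lborel {0..<max 0 (v - \<epsilon>)} \<le> sublevel_measure F v"
    unfolding sublevel_measure_def using assms(2,3) \<open>0 \<le> \<epsilon>\<close>
    by (intro measure_mono_fmeasurable sublevel_set_fmeasurable[OF assms(1)])
      (fastforce simp: less_max_iff_disj)+
  ultimately show ?thesis
    using \<open>0 \<le> \<epsilon>\<close> assms(3) by (simp add: abs_le_iff)
qed

lemma abs_cdf_diff_le:
  assumes "real_distribution P" "measure P {0..1} = 1"
    and "\<And>A. A \<in> sets borel \<Longrightarrow> A \<subseteq> {0..1} \<Longrightarrow>
      \<bar>measure P A - measure (uniform_measure lborel {0..1}) A\<bar> \<le> \<epsilon>"
    and "t \<in> {0..1}"
  shows "\<bar>cdf P t - t\<bar> \<le> \<epsilon>"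
proof -
  interpret real_distribution P by fact
  have "AE x in P. x \<in> {0..1}"
    using assms(2) by (intro AE_prob_1) auto
  then have "cdf P t = measure P {0..t}"
    unfolding cdf_def using assms(4) by (intro finite_measure_eq_AE) (auto elim!: eventually_mono)
  then show ?thesis
    using assms(3)[of "{0..t}"] assms(4) by simp
qed

section \<open>Expected order statistics\<close>

lemma nn_integral_order_stat:
  assumes "real_distribution R" "measure R {0..1} = 1" "1 \<le> k" "k \<le> m"
  shows "(\<integral>\<^sup>+w. ennreal (order_stat m k w) \<partial>PiM {..<m} (\<lambda>_. R)) =
    (\<integral>\<^sup>+t\<in>{0..1}. ennreal (binomial_lower_tail m k (cdf R t)) \<partial>lborel)"
proof -
  interpret N: prob_space "PiM {..<m} (\<lambda>_. R)"
    using assms(1) by (intro prob_space_PiM) (simp add: real_distribution_def)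
  show ?thesis
    using nn_integral_eq_tail_integral[OF N.sigma_finite_measure_axioms
        order_stat_measurable[OF assms(1,3,4)] AE_order_stat_in_unit_interval[OF assms]]
    by (simp add: N.emeasure_eq_measure prob_order_stat_greater[OF assms(1,3,4)])
qed

lemma integral_order_stat_uniform:
  assumes "1 \<le> k" "k \<le> m"
  shows "(\<integral>w. order_stat m k w \<partial>PiM {..<m} (\<lambda>_. uniform_measure lborel {0..1})) = real k / real (m + 1)"
proof -
  let ?U = "uniform_measure lborel {0..1::real}"
  note U = real_distribution_uniform_unit_interval
  have "(\<integral>\<^sup>+w. ennreal (order_stat m k w) \<partial>PiM {..<m} (\<lambda>_. ?U)) =
      (\<integral>\<^sup>+t\<in>{0..1}. ennreal (binomial_lower_tail m k (cdf ?U t)) \<partial>lborel)"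
    by (rule nn_integral_order_stat[OF U _ assms]) simp
  also have "\<dots> = (\<integral>\<^sup>+t\<in>{0..1}. ennreal (binomial_lower_tail m k t) \<partial>lborel)"
    by (intro nn_integral_cong) (simp add: cdf_uniform_unit_interval indicator_def)
  also have "\<dots> = ennreal (real k / real (m + 1))"
    by (intro nn_integral_has_integral_lebesgue' binomial_lower_tail_nonneg
        has_integral_binomial_lower_tail assms)
  finally show ?thesis
    using AE_order_stat_in_unit_interval[OF U _ assms]
    by (subst integral_eq_nn_integral) (auto intro: order_stat_measurable[OF U assms] elim!: eventually_mono)
qed

lemma integral_order_stat_eq_uniform_sublevel:
  assumes "real_distribution R" "measure R {0..1} = 1" "1 \<le> k" "k \<le> m"
  shows "(\<integral>w. order_stat m k w \<partial>PiM {..<m} (\<lambda>_. R)) =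
    (\<integral>w. sublevel_measure (cdf R) (order_stat m k w) \<partial>PiM {..<m} (\<lambda>_. uniform_measure lborel {0..1}))"
proof -
  let ?N = "PiM {..<m} (\<lambda>_. uniform_measure lborel {0..1::real})"
  let ?Y = "order_stat m k"
  note U = real_distribution_uniform_unit_interval
  interpret R: real_distribution R by fact
  interpret N: prob_space ?N
    using U by (intro prob_space_PiM) (simp add: real_distribution_def)
  have [measurable]: "cdf R \<in> borel_measurable borel"
    by (rule borel_measurable_cdf[OF assms(1)])
  have [measurable]: "?Y \<in> borel_measurable ?N" "?Y \<in> borel_measurable (PiM {..<m} (\<lambda>_. R))"
    by (intro order_stat_measurable assms U)+
  have [measurable]: "sublevel_measure (cdf R) \<in> borel_measurable borel"
    by (rule borel_measurable_sublevel_measure) measurable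
  have "(\<integral>\<^sup>+w. ennreal (?Y w) \<partial>PiM {..<m} (\<lambda>_. R)) =
      (\<integral>\<^sup>+t\<in>{0..1}. ennreal (binomial_lower_tail m k (cdf R t)) \<partial>lborel)"
    by (rule nn_integral_order_stat[OF assms])
  also have "\<dots> = (\<integral>\<^sup>+t\<in>{0..1}. emeasure ?N {w \<in> space ?N. cdf R t < ?Y w} \<partial>lborel)"
    using R.cdf_nonneg R.cdf_bounded_prob
    by (simp add: N.emeasure_eq_measure prob_order_stat_greater[OF U assms(3,4)] cdf_uniform_unit_interval)
  also have "\<dots> = (\<integral>\<^sup>+w. emeasure lborel {t \<in> {0..1}. cdf R t < ?Y w} \<partial>?N)"
    by (rule nn_integral_threshold_swap[OF N.sigma_finite_measure_axioms]) measurable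
  also have "\<dots> = (\<integral>\<^sup>+w. ennreal (sublevel_measure (cdf R) (?Y w)) \<partial>?N)"
    unfolding sublevel_measure_def
    by (intro nn_integral_cong emeasure_eq_measure2 sublevel_set_fmeasurable) measurable
  finally show ?thesis
    using AE_order_stat_in_unit_interval[OF assms] sublevel_measure_in_unit_interval[of "cdf R"]
    by (subst (1 2) integral_eq_nn_integral) (auto elim!: eventually_mono)
qed

theorem lemma12:
  fixes P :: "real measure" and \<epsilon> :: real and m k :: nat
  assumes "prob_space P"
    and "sets P = sets borel"
    and "measure P {0..1} = 1"
    and "\<And>x. measure P {x} = 0"
    and "bij_betw (cdf P) {0..1} {0..1}"
    and "\<And>A. A \<in> sets borel \<Longrightarrow> A \<subseteq> {0..1} \<Longrightarrow>
           \<bar>measure P A - measure (uniform_measure lborel {0..1}) A\<bar> \<le> \<epsilon>"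
    and "1 \<le> k" and "k \<le> m"
  shows "\<bar>(\<integral>w. order_stat m k w \<partial>(PiM {..<m} (\<lambda>_. P))) - real k / real (m + 1)\<bar> \<le> \<epsilon>"
proof -
  let ?N = "PiM {..<m} (\<lambda>_. uniform_measure lborel {0..1::real})"
  let ?Y = "order_stat m k"
  note U = real_distribution_uniform_unit_interval
  have P: "real_distribution P"
    using assms(1,2) by (simp add: real_distribution_def real_distribution_axioms_def)
  interpret N: prob_space ?N
    using U by (intro prob_space_PiM) (simp add: real_distribution_def)
  have cdf_P [measurable]: "cdf P \<in> borel_measurable borel"
    by (rule borel_measurable_cdf[OF P])
  have Y [measurable]: "?Y \<in> borel_measurable ?N"
    by (rule order_stat_measurable[OF U assms(7,8)])
  have Y01: "AE w in ?N. ?Y w \<in> {0..1}"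
    by (rule AE_order_stat_in_unit_interval[OF U _ assms(7,8)]) simp
  have "\<bar>(\<integral>w. sublevel_measure (cdf P) (?Y w) \<partial>?N) - (\<integral>w. ?Y w \<partial>?N)\<bar> \<le> \<epsilon>"
  proof (rule N.abs_integral_diff_le)
    show "integrable ?N (\<lambda>w. sublevel_measure (cdf P) (?Y w))"
      using sublevel_measure_in_unit_interval[OF cdf_P]
      by (intro N.integrable_const_bound[where B=1] measurable_compose[OF Y]
          borel_measurable_sublevel_measure cdf_P) auto
    have "AE w in ?N. norm (?Y w) \<le> 1"
      using Y01 by eventually_elim auto
    then show "integrable ?N ?Y"
      using Y by (rule N.integrable_const_bound)
    show "AE w in ?N. \<bar>sublevel_measure (cdf P) (?Y w) - ?Y w\<bar> \<le> \<epsilon>"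
      using Y01 by eventually_elim (intro abs_sublevel_measure_diff_le cdf_P abs_cdf_diff_le[OF P assms(3,6)])
  qed
  then show ?thesis
    using integral_order_stat_eq_uniform_sublevel[OF P assms(3,7,8)] integral_order_stat_uniform[OF assms(7,8)]
    by simp
qed

end
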